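(* Let $\alpha>0$ and $\varepsilon>0$. Let $X,Y$ be finite sets with $Y\ne\emptyset$, and let $A\in\mathbb{R}^{X\times Y}$ satisfy $\operatorname{Ldim}_\alpha(A)=d$ and $\max_{x,y}|A(x,y)|=M>0$. Then there exist a subset $S\subseteq Y$ with $$|S|\ge |Y|\left(\frac{\varepsilon}{\lceil 2M/\alpha\rceil}\right)^{d}$$ and a function $g:X\to[-M,M]$ such that for every $x\in X$, $$\Pr_{y\in S}\bigl[\,|A(x,y)-g(x)|\ge 2\alpha\,\bigr]\le\varepsilon,$$ where $y$ is uniform in $S$.
   Context: A weighted mistake tree of depth $d$ over a domain $X$ is a complete binary tree of depth $d$ in which each internal node $\nu$ is labelled by an element $x(\nu)\in X$ and a real number $w(\nu)$, and each internal node has a designated left child and right child. For $\alpha>0$, a matrix $A\in\mathbb{R}^{X\times Y}$ $\alpha$-shatters a weighted mistake tree if for every root-to-leaf path $(\nu_1,\dots,\nu_{d+1})$ there is a column $y\in Y$ such that for all $1\le i\le d$: if $\nu_{i+1}$ is the left child of $\nu_i$ then $A(x(\nu_i),y)\ge w(\nu_i)+\alpha/2$, and if $\nu_{i+1}$ is the right child of $\nu_i$ then $A(x(\nu_i),y)\le w(\nu_i)-\alpha/2$. The $\alpha$-weighted Littlestone dimension $\operatorname{Ldim}_\alpha(A)$ is the largest $d$ such that some weighted mistake tree of depth $d$ over $X$ is $\alpha$-shattered by $A$. *)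

theory Defs
  imports Complex_Main
begin

text \<open>A weighted mistake tree of depth d over X: internal nodes are addressed by
  the list of directions taken from the root (True = left child, False = right child);
  an address of length < d is an internal node, labelled by an element of X and a weight.\<close>

definition weighted_mistake_tree :: "'a set \<Rightarrow> nat \<Rightarrow> (bool list \<Rightarrow> 'a \<times> real) \<Rightarrow> bool" where
  "weighted_mistake_tree X d T \<longleftrightarrow> (\<forall>p. length p < d \<longrightarrow> fst (T p) \<in> X)"

definition shatters :: "real \<Rightarrow> 'b set \<Rightarrow> ('a \<Rightarrow> 'b \<Rightarrow> real) \<Rightarrow> nat \<Rightarrow> (bool list \<Rightarrow> 'a \<times> real) \<Rightarrow> bool" where
  "shatters \<alpha> Y A d T \<longleftrightarrow>
     (\<forall>b. length b = d \<longrightarrow>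
        (\<exists>y\<in>Y. \<forall>i<d.
           (b ! i \<longrightarrow> A (fst (T (take i b))) y \<ge> snd (T (take i b)) + \<alpha> / 2) \<and>
           (\<not> b ! i \<longrightarrow> A (fst (T (take i b))) y \<le> snd (T (take i b)) - \<alpha> / 2)))"

definition Ldim :: "real \<Rightarrow> 'a set \<Rightarrow> 'b set \<Rightarrow> ('a \<Rightarrow> 'b \<Rightarrow> real) \<Rightarrow> nat" where
  "Ldim \<alpha> X Y A = (GREATEST d. \<exists>T. weighted_mistake_tree X d T \<and> shatters \<alpha> Y A d T)"

end

theory Submission
  imports Defs
begin

text \<open>If every row x has a value in [-M, M] from which at most an \<epsilon>-fraction of the columns
  is 2\<alpha>-far, take S = Y. Otherwise fix a row x for which no value works. A root labelled (x, w)
  over trees shattered by the columns above w + \<alpha>/2 and below w - \<alpha>/2 is a shattered tree one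
  level deeper, so for each w one of these two column sets has smaller Littlestone dimension.
  At the threshold s between the two regimes, v = max (-M) s makes both the columns above
  v + 3\<alpha>/2 and those below v - 3\<alpha>/2 of smaller dimension. The columns 2\<alpha>-far from v lie in
  their union, so one of them has at least \<epsilon>|Y|/2 columns, and recursing on it costs a factor
  \<epsilon>/2 \<ge> \<epsilon>/\<lceil>2M/\<alpha>\<rceil> per level; when M \<le> \<alpha>/2 the value 0 works for every row.\<close>

definition on_side :: "real \<Rightarrow> ('a \<Rightarrow> 'b \<Rightarrow> real) \<Rightarrow> 'a \<times> real \<Rightarrow> bool \<Rightarrow> 'b \<Rightarrow> bool" where
  "on_side \<alpha> A node left y \<longleftrightarrow>
     (if left then snd node + \<alpha> / 2 \<le> A (fst node) y else A (fst node) y \<le> snd node - \<alpha> / 2)"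

definition follows_path ::
  "real \<Rightarrow> ('a \<Rightarrow> 'b \<Rightarrow> real) \<Rightarrow> (bool list \<Rightarrow> 'a \<times> real) \<Rightarrow> bool list \<Rightarrow> 'b \<Rightarrow> bool" where
  "follows_path \<alpha> A T b y \<longleftrightarrow> (\<forall>i<length b. on_side \<alpha> A (T (take i b)) (b ! i) y)"

definition tree_shattered :: "real \<Rightarrow> 'a set \<Rightarrow> 'b set \<Rightarrow> ('a \<Rightarrow> 'b \<Rightarrow> real) \<Rightarrow> nat \<Rightarrow> bool" where
  "tree_shattered \<alpha> X Y A d \<longleftrightarrow> (\<exists>T. weighted_mistake_tree X d T \<and> shatters \<alpha> Y A d T)"

text \<open>For S = {} the ratio is 0 / 0 = 0, so every v qualifies.\<close>

definition concentrated_near :: "real \<Rightarrow> real \<Rightarrow> ('a \<Rightarrow> 'b \<Rightarrow> real) \<Rightarrow> 'b set \<Rightarrow> 'a \<Rightarrow> real \<Rightarrow> bool" where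
  "concentrated_near \<epsilon> r A S x v \<longleftrightarrow> real (card {y\<in>S. \<bar>A x y - v\<bar> \<ge> r}) / real (card S) \<le> \<epsilon>"

lemma shatters_iff_follows_path:
  "shatters \<alpha> Y A d T \<longleftrightarrow> (\<forall>b. length b = d \<longrightarrow> (\<exists>y\<in>Y. follows_path \<alpha> A T b y))"
  unfolding shatters_def follows_path_def on_side_def if_bool_eq_conj by blast

lemma follows_path_Cons:
  "follows_path \<alpha> A T (h # b) y \<longleftrightarrow>
     on_side \<alpha> A (T []) h y \<and> follows_path \<alpha> A (\<lambda>p. T (h # p)) b y"
  unfolding follows_path_def by (simp add: All_less_Suc2)

lemma on_side_disjoint: "\<alpha> > 0 \<Longrightarrow> on_side \<alpha> A node True y \<Longrightarrow> \<not> on_side \<alpha> A node False y"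
  unfolding on_side_def by simp

lemma shatters_mono: "Y \<subseteq> Y' \<Longrightarrow> shatters \<alpha> Y A d T \<Longrightarrow> shatters \<alpha> Y' A d T"
  unfolding shatters_iff_follows_path by blast

lemma shatters_subtree:
  assumes "shatters \<alpha> Y A (Suc n) T"
  shows "shatters \<alpha> {y\<in>Y. on_side \<alpha> A (T []) h y} A n (\<lambda>p. T (h # p))"
  unfolding shatters_iff_follows_path
proof (intro allI impI)
  fix b :: "bool list" assume "length b = n"
  then obtain y where "y \<in> Y" "follows_path \<alpha> A T (h # b) y"
    using assms unfolding shatters_iff_follows_path by (metis length_Cons)
  then show "\<exists>y\<in>{y\<in>Y. on_side \<alpha> A (T []) h y}. follows_path \<alpha> A (\<lambda>p. T (h # p)) b y"
    by (auto simp: follows_path_Cons)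
qed

lemma shatters_card:
  assumes "\<alpha> > 0" "finite Y" "shatters \<alpha> Y A n T"
  shows "2 ^ n \<le> card Y"
  using assms(2,3)
proof (induction n arbitrary: Y T)
  case 0
  then have "Y \<noteq> {}" unfolding shatters_iff_follows_path by blast
  with "0.prems"(1) show ?case by (simp add: Suc_leI card_gt_0_iff)
next
  case (Suc n)
  define side where "side h = {y\<in>Y. on_side \<alpha> A (T []) h y}" for h
  have "side True \<inter> side False = {}"
    unfolding side_def using on_side_disjoint[OF assms(1), of A "T []"] by blast
  then have "card (side True) + card (side False) \<le> card Y"
    using Suc.prems(1) by (subst card_Un_disjoint[symmetric]) (auto simp: side_def intro: card_mono)
  moreover have "2 ^ n \<le> card (side h)" for h
    using Suc.IH[OF _ shatters_subtree[OF Suc.prems(2)]] Suc.prems(1) unfolding side_def by simp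
  ultimately show ?case
    using add_mono[of "2 ^ n" "card (side True)" "2 ^ n" "card (side False)"] by simp
qed

lemma tree_shattered_mono: "Y \<subseteq> Y' \<Longrightarrow> tree_shattered \<alpha> X Y A d \<Longrightarrow> tree_shattered \<alpha> X Y' A d"
  unfolding tree_shattered_def using shatters_mono by blast

lemma tree_shattered_0_iff: "tree_shattered \<alpha> X Y A 0 \<longleftrightarrow> Y \<noteq> {}"
  unfolding tree_shattered_def weighted_mistake_tree_def shatters_iff_follows_path
  by (auto simp: follows_path_def)

lemma tree_shattered_SucI:
  assumes "x \<in> X"
    and "tree_shattered \<alpha> X {y\<in>Y. on_side \<alpha> A (x, w) True y} A n"
    and "tree_shattered \<alpha> X {y\<in>Y. on_side \<alpha> A (x, w) False y} A n"
  shows "tree_shattered \<alpha> X Y A (Suc n)"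
proof -
  obtain T1 T2 where T1: "weighted_mistake_tree X n T1" "shatters \<alpha> {y\<in>Y. on_side \<alpha> A (x, w) True y} A n T1"
    and T2: "weighted_mistake_tree X n T2" "shatters \<alpha> {y\<in>Y. on_side \<alpha> A (x, w) False y} A n T2"
    using assms(2,3) unfolding tree_shattered_def by blast
  define T where "T p = (case p of [] \<Rightarrow> (x, w) | h # q \<Rightarrow> if h then T1 q else T2 q)" for p
  have subtree: "weighted_mistake_tree X n (\<lambda>q. T (h # q))
      \<and> shatters \<alpha> {y\<in>Y. on_side \<alpha> A (x, w) h y} A n (\<lambda>q. T (h # q))" for h
    using T1 T2 by (cases h) (simp_all add: T_def)
  have "weighted_mistake_tree X (Suc n) T"
    unfolding weighted_mistake_tree_def
  proof (intro allI impI)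
    fix p :: "bool list" assume "length p < Suc n"
    then show "fst (T p) \<in> X"
      using subtree assms(1) unfolding weighted_mistake_tree_def by (cases p) (auto simp: T_def)
  qed
  moreover have "shatters \<alpha> Y A (Suc n) T"
    unfolding shatters_iff_follows_path
  proof (intro allI impI)
    fix b :: "bool list" assume "length b = Suc n"
    then obtain h q where b: "b = h # q" "length q = n" by (cases b) auto
    then obtain y where "y \<in> Y" "on_side \<alpha> A (x, w) h y" "follows_path \<alpha> A (\<lambda>q. T (h # q)) q y"
      using subtree[of h] unfolding shatters_iff_follows_path by blast
    then show "\<exists>y\<in>Y. follows_path \<alpha> A T b y"
      using b by (auto simp: follows_path_Cons T_def)
  qed
  ultimately show ?thesis unfolding tree_shattered_def by blast
qed

lemma not_tree_shattered_Suc_Ldim: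
  assumes "\<alpha> > 0" "finite Y"
  shows "\<not> tree_shattered \<alpha> X Y A (Suc (Ldim \<alpha> X Y A))"
proof
  assume "tree_shattered \<alpha> X Y A (Suc (Ldim \<alpha> X Y A))"
  moreover have "n \<le> card Y" if shattered: "tree_shattered \<alpha> X Y A n" for n
  proof -
    obtain T where "shatters \<alpha> Y A n T" using shattered unfolding tree_shattered_def by blast
    then have "2 ^ n \<le> card Y" by (rule shatters_card[OF assms])
    then show ?thesis using less_exp[of n] by linarith
  qed
  ultimately have "Suc (Ldim \<alpha> X Y A) \<le> Ldim \<alpha> X Y A"
    unfolding Ldim_def tree_shattered_def[symmetric] by (rule Greatest_le_nat)
  then show False by simp
qed

lemma threshold_of_upward_closed:
  fixes P :: "real \<Rightarrow> bool"
  assumes up: "\<And>w w'. P w \<Longrightarrow> w \<le> w' \<Longrightarrow> P w'" and "P a" and "\<not> P b"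
  shows "\<exists>s\<in>{b..a}. (\<forall>w>s. P w) \<and> (\<forall>w<s. \<not> P w)"
proof -
  define s where "s = Inf (Collect P)"
  have ne: "Collect P \<noteq> {}" using \<open>P a\<close> by blast
  have above: "b \<le> w" if "P w" for w
    using up[OF that, of b] \<open>\<not> P b\<close> by fastforce
  then have bdd: "bdd_below (Collect P)" by (intro bdd_belowI) simp
  have "s \<le> a" unfolding s_def using \<open>P a\<close> bdd by (simp add: cInf_lower)
  moreover have "b \<le> s" unfolding s_def using ne above by (intro cInf_greatest) simp_all
  moreover have "P w" if greater: "s < w" for w
  proof -
    obtain w0 where "P w0" "w0 < w" using greater cInf_less_iff[OF ne bdd] unfolding s_def by auto
    then show ?thesis using up by simp
  qed
  moreover have "\<not> P w" if "w < s" for w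
    using that bdd cInf_lower[of w "Collect P"] unfolding s_def by auto
  ultimately show ?thesis by (intro bexI[of _ s]) auto
qed

lemma concentrated_near_empty: "0 \<le> \<epsilon> \<Longrightarrow> concentrated_near \<epsilon> r A {} x v"
  unfolding concentrated_near_def by simp

lemma concentrated_near_if_close:
  assumes "0 \<le> \<epsilon>" "\<And>y. y \<in> S \<Longrightarrow> \<bar>A x y - v\<bar> < r"
  shows "concentrated_near \<epsilon> r A S x v"
proof -
  have no_far: "{y\<in>S. r \<le> \<bar>A x y - v\<bar>} = {}" using assms(2) by force
  show ?thesis unfolding concentrated_near_def no_far using assms(1) by simp
qed

lemma large_subset_not_tree_shattered:
  fixes \<alpha> \<epsilon> M :: real
  assumes "\<alpha> > 0" "\<epsilon> \<le> 2" "finite Y" "0 \<le> M" "x \<in> X" and bounded: "\<forall>y\<in>Y. \<bar>A x y\<bar> \<le> M"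
    and not_shattered: "\<not> tree_shattered \<alpha> X Y A (Suc n)"
    and spread: "\<forall>v\<in>{-M..M}. \<not> concentrated_near \<epsilon> (2 * \<alpha>) A Y x v"
  shows "\<exists>Y'\<subseteq>Y. \<not> tree_shattered \<alpha> X Y' A n \<and> \<epsilon> * card Y / 2 \<le> card Y'"
proof (cases "tree_shattered \<alpha> X Y A n")
  case False
  have "\<epsilon> * card Y \<le> 2 * card Y" using \<open>\<epsilon> \<le> 2\<close> by (simp add: mult_right_mono)
  with False show ?thesis by (intro exI[of _ Y]) auto
next
  case True
  define side where "side w h = {y\<in>Y. on_side \<alpha> A (x, w) h y}" for w h
  define P where "P w \<longleftrightarrow> \<not> tree_shattered \<alpha> X (side w True) A n" for w
  have below: "\<not> tree_shattered \<alpha> X (side w False) A n" if "\<not> P w" for w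
    using that not_shattered tree_shattered_SucI[OF \<open>x \<in> X\<close>] unfolding P_def side_def by blast
  have "P w'" if "P w" "w \<le> w'" for w w'
  proof -
    have "side w' True \<subseteq> side w True" using \<open>w \<le> w'\<close> by (auto simp: side_def on_side_def)
    then show ?thesis using \<open>P w\<close> tree_shattered_mono unfolding P_def by blast
  qed
  moreover have "P M"
  proof -
    have "side M True = {}" using bounded \<open>\<alpha> > 0\<close> by (force simp: side_def on_side_def)
    then show ?thesis
      using shatters_card[OF \<open>\<alpha> > 0\<close> finite.emptyI] unfolding P_def tree_shattered_def by force
  qed
  moreover have "\<not> P (- M - \<alpha> / 2)"
  proof -
    have "side (- M - \<alpha> / 2) True = Y" using bounded by (force simp: side_def on_side_def)
    then show ?thesis using True unfolding P_def by simp
  qed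
  ultimately obtain s where s: "s \<in> {- M - \<alpha> / 2..M}" "\<forall>w>s. P w" "\<forall>w<s. \<not> P w"
    using threshold_of_upward_closed by blast
  define v where "v = max (- M) s"
  define up where "up = side (v + 3 * \<alpha> / 2) True"
  define down where "down = side (v - 3 * \<alpha> / 2) False"
  have v: "v \<in> {-M..M}" using s(1) \<open>0 \<le> M\<close> by (auto simp: v_def)
  have small_up: "\<not> tree_shattered \<alpha> X up A n"
    using s(2) \<open>\<alpha> > 0\<close> unfolding P_def up_def v_def by force
  have small_down: "\<not> tree_shattered \<alpha> X down A n"
    using s(1,3) \<open>\<alpha> > 0\<close> below unfolding down_def v_def by force
  define far where "far = {y\<in>Y. 2 * \<alpha> \<le> \<bar>A x y - v\<bar>}"
  obtain T where "shatters \<alpha> Y A n T" using True unfolding tree_shattered_def by blast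
  then have "2 ^ n \<le> card Y" by (rule shatters_card[OF \<open>\<alpha> > 0\<close> \<open>finite Y\<close>])
  then have "card Y > 0" by (rule less_le_trans[rotated]) simp
  moreover have "\<not> concentrated_near \<epsilon> (2 * \<alpha>) A Y x v" using spread v by blast
  ultimately have "\<epsilon> * card Y < card far"
    by (simp add: concentrated_near_def far_def pos_divide_le_eq)
  also have "card far \<le> card (up \<union> down)"
    using \<open>finite Y\<close> by (intro card_mono) (auto simp: far_def up_def down_def side_def on_side_def)
  also have "\<dots> \<le> card up + card down" by (rule card_Un_le)
  finally have "\<epsilon> * card Y / 2 \<le> card up \<or> \<epsilon> * card Y / 2 \<le> card down" by linarith
  then show ?thesis
  proof
    assume "\<epsilon> * card Y / 2 \<le> card up"
    with small_up show ?thesis by (intro exI[of _ up]) (auto simp: up_def side_def)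
  next
    assume "\<epsilon> * card Y / 2 \<le> card down"
    with small_down show ?thesis by (intro exI[of _ down]) (auto simp: down_def side_def)
  qed
qed

lemma concentrated_subset_of_bounded_Ldim:
  fixes \<alpha> \<epsilon> M :: real
  assumes "\<alpha> > 0" "0 < \<epsilon>" "\<epsilon> \<le> 2" "0 \<le> M"
    and "finite Y" "\<forall>x\<in>X. \<forall>y\<in>Y. \<bar>A x y\<bar> \<le> M" "\<not> tree_shattered \<alpha> X Y A (Suc n)"
  shows "\<exists>S\<subseteq>Y. card Y * (\<epsilon> / 2) ^ n \<le> card S
    \<and> (\<forall>x\<in>X. \<exists>v\<in>{-M..M}. concentrated_near \<epsilon> (2 * \<alpha>) A S x v)"
  using assms(5-7)
proof (induction n arbitrary: Y)
  case 0
  have "\<exists>v\<in>{-M..M}. concentrated_near \<epsilon> (2 * \<alpha>) A Y x v" if "x \<in> X" for x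
  proof (rule ccontr)
    assume "\<not> ?thesis"
    then have spread: "\<forall>v\<in>{-M..M}. \<not> concentrated_near \<epsilon> (2 * \<alpha>) A Y x v" by blast
    have "\<forall>y\<in>Y. \<bar>A x y\<bar> \<le> M" using "0.prems"(2) that by blast
    from large_subset_not_tree_shattered[OF assms(1,3) "0.prems"(1) assms(4) that this "0.prems"(3) spread]
    obtain Y' where "\<not> tree_shattered \<alpha> X Y' A 0" "\<epsilon> * card Y / 2 \<le> card Y'" by blast
    then have "card Y = 0" using \<open>0 < \<epsilon>\<close> by (auto simp: tree_shattered_0_iff mult_le_0_iff)
    then have "Y = {}" using "0.prems"(1) by simp
    moreover have "(0::real) \<in> {-M..M}" using \<open>0 \<le> M\<close> by simp
    ultimately show False
      using spread concentrated_near_empty[of \<epsilon> "2 * \<alpha>" A x 0] \<open>0 < \<epsilon>\<close> by simp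
  qed
  then show ?case by (intro exI[of _ Y]) simp
next
  case (Suc n)
  show ?case
  proof (cases "\<forall>x\<in>X. \<exists>v\<in>{-M..M}. concentrated_near \<epsilon> (2 * \<alpha>) A Y x v")
    case True
    have "(\<epsilon> / 2) ^ Suc n \<le> 1" using assms(2,3) by (intro power_le_one) simp_all
    then have "card Y * (\<epsilon> / 2) ^ Suc n \<le> card Y" by (rule mult_left_le) simp
    with True show ?thesis by (intro exI[of _ Y]) simp
  next
    case False
    then obtain x where x: "x \<in> X"
      and spread: "\<forall>v\<in>{-M..M}. \<not> concentrated_near \<epsilon> (2 * \<alpha>) A Y x v" by blast
    have "\<forall>y\<in>Y. \<bar>A x y\<bar> \<le> M" using Suc.prems(2) x by blast
    from large_subset_not_tree_shattered[OF assms(1,3) Suc.prems(1) assms(4) x this Suc.prems(3) spread]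
    obtain Y' where Y': "Y' \<subseteq> Y" "\<not> tree_shattered \<alpha> X Y' A (Suc n)" "\<epsilon> * card Y / 2 \<le> card Y'"
      by blast
    have "finite Y'" "\<forall>x\<in>X. \<forall>y\<in>Y'. \<bar>A x y\<bar> \<le> M"
      using Y'(1) Suc.prems(1,2) finite_subset by blast+
    from Suc.IH[OF this Y'(2)] obtain S where S: "S \<subseteq> Y'" "card Y' * (\<epsilon> / 2) ^ n \<le> card S"
      "\<forall>x\<in>X. \<exists>v\<in>{-M..M}. concentrated_near \<epsilon> (2 * \<alpha>) A S x v"
      by blast
    have "card Y * (\<epsilon> / 2) ^ Suc n = (\<epsilon> * card Y / 2) * (\<epsilon> / 2) ^ n" by simp
    also have "\<dots> \<le> card Y' * (\<epsilon> / 2) ^ n"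
      using Y'(3) assms(2) by (intro mult_right_mono) simp_all
    also have "\<dots> \<le> card S" by (rule S(2))
    finally show ?thesis using S(1,3) Y'(1) by (intro exI[of _ S]) simp
  qed
qed

lemma concentrated_subset_of_bounded_Ldim_ceiling:
  fixes \<alpha> \<epsilon> M :: real
  assumes "\<alpha> > 0" "0 < \<epsilon>" "\<epsilon> \<le> 1" "0 < M"
    and "finite Y" and bounded: "\<forall>x\<in>X. \<forall>y\<in>Y. \<bar>A x y\<bar> \<le> M"
    and not_shattered: "\<not> tree_shattered \<alpha> X Y A (Suc d)"
  shows "\<exists>S\<subseteq>Y. card Y * (\<epsilon> / \<lceil>2 * M / \<alpha>\<rceil>) ^ d \<le> card S
    \<and> (\<forall>x\<in>X. \<exists>v\<in>{-M..M}. concentrated_near \<epsilon> (2 * \<alpha>) A S x v)"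
proof (cases "2 * M \<le> \<alpha>")
  case True
  then have "\<lceil>2 * M / \<alpha>\<rceil> = 1" using assms(1,4) by (simp add: ceiling_eq_iff field_simps)
  moreover have "\<epsilon> ^ d \<le> 1" using assms(2,3) by (intro power_le_one) simp_all
  then have "card Y * \<epsilon> ^ d \<le> card Y" by (rule mult_left_le) simp
  moreover have "\<forall>x\<in>X. \<exists>v\<in>{-M..M}. concentrated_near \<epsilon> (2 * \<alpha>) A Y x v"
  proof
    fix x assume "x \<in> X"
    have "concentrated_near \<epsilon> (2 * \<alpha>) A Y x 0"
    proof (rule concentrated_near_if_close)
      show "\<bar>A x y - 0\<bar> < 2 * \<alpha>" if "y \<in> Y" for y
        using bounded \<open>x \<in> X\<close> that True assms(1) by fastforce
    qed (use assms(2) in simp)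
    then show "\<exists>v\<in>{-M..M}. concentrated_near \<epsilon> (2 * \<alpha>) A Y x v"
      using assms(4) by (intro bexI[of _ 0]) simp_all
  qed
  ultimately show ?thesis by (intro exI[of _ Y]) simp
next
  case False
  then have "2 \<le> \<lceil>2 * M / \<alpha>\<rceil>" using assms(1) by (simp add: le_ceiling_iff field_simps)
  then have "(\<epsilon> / \<lceil>2 * M / \<alpha>\<rceil>) ^ d \<le> (\<epsilon> / 2) ^ d"
    using assms(2) by (intro power_mono divide_left_mono) auto
  then have "card Y * (\<epsilon> / \<lceil>2 * M / \<alpha>\<rceil>) ^ d \<le> card Y * (\<epsilon> / 2) ^ d"
    by (rule mult_left_mono) simp
  moreover obtain S where "S \<subseteq> Y" "card Y * (\<epsilon> / 2) ^ d \<le> card S"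
    "\<forall>x\<in>X. \<exists>v\<in>{-M..M}. concentrated_near \<epsilon> (2 * \<alpha>) A S x v"
    using concentrated_subset_of_bounded_Ldim[OF assms(1,2) _ _ assms(5) bounded not_shattered]
      assms(3,4) by auto
  ultimately show ?thesis by (intro exI[of _ S]) auto
qed

lemma abs_le_Max_entries:
  assumes "finite X" "finite Y" "x \<in> X" "y \<in> Y"
  shows "\<bar>A x y\<bar> \<le> Max {\<bar>A x y\<bar> | x y. x \<in> X \<and> y \<in> Y}"
proof -
  have "{\<bar>A x y\<bar> | x y. x \<in> X \<and> y \<in> Y} = (\<lambda>(x, y). \<bar>A x y\<bar>) ` (X \<times> Y)" by auto
  then have "finite {\<bar>A x y\<bar> | x y. x \<in> X \<and> y \<in> Y}" using assms(1,2) by simp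
  moreover have "\<bar>A x y\<bar> \<in> {\<bar>A x y\<bar> | x y. x \<in> X \<and> y \<in> Y}" using assms(3,4) by blast
  ultimately show ?thesis by (rule Max_ge)
qed

theorem proposition3p1:
  fixes \<alpha> \<epsilon> M :: real and X :: "'a set" and Y :: "'b set"
    and A :: "'a \<Rightarrow> 'b \<Rightarrow> real" and d :: nat
  assumes "\<alpha> > 0" and "\<epsilon> > 0" and "\<epsilon> \<le> 1"
    and "finite X" and "finite Y" and "Y \<noteq> {}"
    and "Ldim \<alpha> X Y A = d"
    and "M = Max {\<bar>A x y\<bar> | x y. x \<in> X \<and> y \<in> Y}" and "M > 0"
  shows "\<exists>S g. S \<subseteq> Y
    \<and> real (card S) \<ge> real (card Y) * (\<epsilon> / real_of_int \<lceil>2 * M / \<alpha>\<rceil>) ^ d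
    \<and> (\<forall>x\<in>X. g x \<in> {-M..M})
    \<and> (\<forall>x\<in>X. real (card {y\<in>S. \<bar>A x y - g x\<bar> \<ge> 2 * \<alpha>}) / real (card S) \<le> \<epsilon>)"
proof -
  have bounded: "\<forall>x\<in>X. \<forall>y\<in>Y. \<bar>A x y\<bar> \<le> M"
    unfolding assms(8) by (intro ballI abs_le_Max_entries[OF assms(4,5)])
  have "\<not> tree_shattered \<alpha> X Y A (Suc d)"
    using not_tree_shattered_Suc_Ldim assms(1,5,7) by blast
  from concentrated_subset_of_bounded_Ldim_ceiling[OF assms(1-3,9,5) bounded this]
  obtain S where S: "S \<subseteq> Y" "card Y * (\<epsilon> / \<lceil>2 * M / \<alpha>\<rceil>) ^ d \<le> card S"
    "\<forall>x\<in>X. \<exists>v\<in>{-M..M}. concentrated_near \<epsilon> (2 * \<alpha>) A S x v"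
    by blast
  moreover obtain g where "\<forall>x\<in>X. g x \<in> {-M..M} \<and> concentrated_near \<epsilon> (2 * \<alpha>) A S x (g x)"
    using bchoice[of X "\<lambda>x v. v \<in> {-M..M} \<and> concentrated_near \<epsilon> (2 * \<alpha>) A S x v"] S(3) by blast
  ultimately show ?thesis unfolding concentrated_near_def by (intro exI[of _ S] exI[of _ g]) simp
qed

end
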